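(* Let $Q$ be a quantity space over a field $K$. For every $x\in[1_Q]$ (the class of $1_Q$ under $\sim$), the measure $\mu_E(x)$ does not depend on the basis $E$ of $Q$.
   Context: A scalable monoid over a (unital, associative) ring $R$ is a monoid $X$ (identity $1_X$, product written $xy$) together with a map $R\times X\to X$, $(\alpha,x)\mapsto\alpha\cdot x$, such that $1\cdot x=x$, $\alpha\cdot(\beta\cdot x)=\alpha\beta\cdot x$ and $\alpha\cdot(xy)=(\alpha\cdot x)y=x(\alpha\cdot y)$. A quantity space over a field $K$ is a commutative scalable monoid $Q$ over $K$ for which there exists a basis, i.e. a finite set $E=\{e_1,\ldots,e_n\}$ of invertible elements of $Q$ such that every $x\in Q$ has a unique expansion $x=\mu\cdot\prod_{i=1}^n e_i^{k_i}$ with $\mu\in K$ and $k_i\in\mathbb{Z}$; the scalar $\mu$ is the measure $\mu_E(x)$ of $x$ relative to $E$. On $Q$, $x\sim y$ iff $\alpha\cdot x=\beta\cdot y$ for some $\alpha,\beta\in K$. *)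

theory Defs
  imports Main
begin

definition scalable_monoid ::
  "('q \<Rightarrow> 'q \<Rightarrow> 'q) \<Rightarrow> 'q \<Rightarrow> ('k::ring_1 \<Rightarrow> 'q \<Rightarrow> 'q) \<Rightarrow> bool" where
  "scalable_monoid mul one smul \<longleftrightarrow>
     (\<forall>x y z. mul (mul x y) z = mul x (mul y z)) \<and>
     (\<forall>x. mul one x = x) \<and> (\<forall>x. mul x one = x) \<and>
     (\<forall>x. smul 1 x = x) \<and>
     (\<forall>a b x. smul a (smul b x) = smul (a * b) x) \<and>
     (\<forall>a x y. smul a (mul x y) = mul (smul a x) y) \<and>
     (\<forall>a x y. smul a (mul x y) = mul x (smul a y))"

definition invertible :: "('q \<Rightarrow> 'q \<Rightarrow> 'q) \<Rightarrow> 'q \<Rightarrow> 'q \<Rightarrow> bool" where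
  "invertible mul one e \<longleftrightarrow> (\<exists>y. mul e y = one \<and> mul y e = one)"

definition inv_el :: "('q \<Rightarrow> 'q \<Rightarrow> 'q) \<Rightarrow> 'q \<Rightarrow> 'q \<Rightarrow> 'q" where
  "inv_el mul one e = (THE y. mul e y = one \<and> mul y e = one)"

primrec npow :: "('q \<Rightarrow> 'q \<Rightarrow> 'q) \<Rightarrow> 'q \<Rightarrow> 'q \<Rightarrow> nat \<Rightarrow> 'q" where
  "npow mul one e 0 = one"
| "npow mul one e (Suc n) = mul e (npow mul one e n)"

definition zpow :: "('q \<Rightarrow> 'q \<Rightarrow> 'q) \<Rightarrow> 'q \<Rightarrow> 'q \<Rightarrow> int \<Rightarrow> 'q" where
  "zpow mul one e k =
     (if 0 \<le> k then npow mul one e (nat k) else npow mul one (inv_el mul one e) (nat (- k)))"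

text \<open>The product \<open>\<prod>_{e\<in>E} e^{k e}\<close> (well defined in a commutative monoid).\<close>
definition qprod :: "('q \<Rightarrow> 'q \<Rightarrow> 'q) \<Rightarrow> 'q \<Rightarrow> 'q set \<Rightarrow> ('q \<Rightarrow> int) \<Rightarrow> 'q" where
  "qprod mul one E k = Finite_Set.fold (\<lambda>e acc. mul (zpow mul one e (k e)) acc) one E"

text \<open>Exponent vectors are functions \<open>E \<rightarrow> \<int>\<close>, normalised to 0 outside \<open>E\<close>.\<close>
definition expvec :: "'q set \<Rightarrow> ('q \<Rightarrow> int) \<Rightarrow> bool" where
  "expvec E k \<longleftrightarrow> (\<forall>e. e \<notin> E \<longrightarrow> k e = 0)"

definition is_basis ::
  "('q \<Rightarrow> 'q \<Rightarrow> 'q) \<Rightarrow> 'q \<Rightarrow> ('k \<Rightarrow> 'q \<Rightarrow> 'q) \<Rightarrow> 'q set \<Rightarrow> bool" where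
  "is_basis mul one smul E \<longleftrightarrow>
     finite E \<and> (\<forall>e\<in>E. invertible mul one e) \<and>
     (\<forall>x. \<exists>!(\<mu>, k). expvec E k \<and> x = smul \<mu> (qprod mul one E k))"

definition quantity_space ::
  "('q \<Rightarrow> 'q \<Rightarrow> 'q) \<Rightarrow> 'q \<Rightarrow> ('k::field \<Rightarrow> 'q \<Rightarrow> 'q) \<Rightarrow> bool" where
  "quantity_space mul one smul \<longleftrightarrow>
     scalable_monoid mul one smul \<and> (\<forall>x y. mul x y = mul y x) \<and>
     (\<exists>E. is_basis mul one smul E)"

definition qmeasure ::
  "('q \<Rightarrow> 'q \<Rightarrow> 'q) \<Rightarrow> 'q \<Rightarrow> ('k \<Rightarrow> 'q \<Rightarrow> 'q) \<Rightarrow> 'q set \<Rightarrow> 'q \<Rightarrow> 'k" where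
  "qmeasure mul one smul E x =
     (THE \<mu>. \<exists>k. expvec E k \<and> x = smul \<mu> (qprod mul one E k))"

definition qsim :: "('k \<Rightarrow> 'q \<Rightarrow> 'q) \<Rightarrow> 'q \<Rightarrow> 'q \<Rightarrow> bool" where
  "qsim smul x y \<longleftrightarrow> (\<exists>\<alpha> \<beta>. smul \<alpha> x = smul \<beta> y)"

end

theory Submission
  imports Defs
begin

text \<open>Since \<open>1\<^sub>Q\<close> is the empty product \<open>\<prod> e\<^sup>0\<close> for every basis \<open>E\<close>, a quantity
  \<open>x \<sim> 1\<^sub>Q\<close> is forced by uniqueness of expansions to have all exponents zero, i.e. \<open>x = \<mu> \<cdot> 1\<^sub>Q\<close>,
  and then \<open>\<mu>\<^sub>E(x) = \<mu>\<close> whatever \<open>E\<close> is.\<close>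

lemma qprod_zero_exponents:
  assumes "\<And>x. mul one x = x"
  shows "qprod mul one E (\<lambda>_. 0) = one"
proof -
  interpret comp_fun_commute "\<lambda>(e::'a) (acc::'a). acc"
    by unfold_locales auto
  have "Finite_Set.fold (\<lambda>e acc. acc) one E = one"
  proof (cases "finite E")
    case True
    then show ?thesis by (induction E rule: finite_induct) auto
  qed simp
  moreover have "(\<lambda>e. mul (zpow mul one e 0)) = (\<lambda>e acc. acc)"
    using assms by (simp add: zpow_def fun_eq_iff)
  ultimately show ?thesis
    by (simp add: qprod_def)
qed

lemma expvec_zero: "expvec E (\<lambda>_. 0)"
  by (simp add: expvec_def)

lemma basis_expansion_unique:
  assumes "is_basis mul one smul E"
    and "expvec E k" "x = smul \<mu> (qprod mul one E k)"
    and "expvec E k'" "x = smul \<mu>' (qprod mul one E k')"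
  shows "\<mu> = \<mu>'" and "k = k'"
proof -
  have "\<exists>!(\<mu>, k). expvec E k \<and> x = smul \<mu> (qprod mul one E k)"
    using assms(1) by (simp add: is_basis_def)
  then have "(\<mu>, k) = (\<mu>', k')"
    using assms(2-5) by (blast elim: ex1E)
  then show "\<mu> = \<mu>'" and "k = k'" by simp_all
qed

lemma qmeasure_eqI:
  assumes "is_basis mul one smul E"
    and "expvec E k" "x = smul \<mu> (qprod mul one E k)"
  shows "qmeasure mul one smul E x = \<mu>"
  unfolding qmeasure_def
proof (rule the_equality)
  show "\<exists>k. expvec E k \<and> x = smul \<mu> (qprod mul one E k)"
    using assms(2,3) by blast
next
  fix \<nu>
  assume "\<exists>k. expvec E k \<and> x = smul \<nu> (qprod mul one E k)"
  then show "\<nu> = \<mu>"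
    using basis_expansion_unique(1)[OF assms(1) _ _ assms(2,3)] by blast
qed

lemma qmeasure_smul_one:
  assumes "is_basis mul one smul E" and "\<And>x. mul one x = x"
  shows "qmeasure mul one smul E (smul \<mu> one) = \<mu>"
  using qmeasure_eqI[OF assms(1) expvec_zero] qprod_zero_exponents[of mul one, OF assms(2)] by simp

lemma qsim_one_imp_smul_one:
  fixes smul :: "'k::ring_1 \<Rightarrow> 'q \<Rightarrow> 'q"
  assumes sm: "scalable_monoid mul one smul" and E: "is_basis mul one smul E"
    and "qsim smul x one"
  obtains \<mu> where "x = smul \<mu> one"
proof -
  have unit: "\<And>x. mul one x = x"
    and smul_smul: "\<And>a b x. smul a (smul b x) = smul (a * b) x"
    using sm by (simp_all add: scalable_monoid_def)
  obtain \<mu> k where k: "expvec E k" and x: "x = smul \<mu> (qprod mul one E k)"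
    using E by (force simp: is_basis_def)
  obtain \<alpha> \<beta> where "smul \<alpha> x = smul \<beta> one"
    using assms(3) by (auto simp: qsim_def)
  then have "smul \<alpha> x = smul \<beta> (qprod mul one E (\<lambda>_. 0))"
    by (simp add: qprod_zero_exponents[of mul one, OF unit])
  moreover have "smul \<alpha> x = smul (\<alpha> * \<mu>) (qprod mul one E k)"
    using x smul_smul by simp
  ultimately have "k = (\<lambda>_. 0)"
    using basis_expansion_unique(2)[OF E k _ expvec_zero] by blast
  then have "x = smul \<mu> one"
    using x qprod_zero_exponents[of mul one, OF unit] by simp
  then show thesis by (rule that)
qed

theorem proposition3p16:
  fixes mul :: "'q \<Rightarrow> 'q \<Rightarrow> 'q" and one :: 'q and smul :: "'k::field \<Rightarrow> 'q \<Rightarrow> 'q"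
  assumes "quantity_space mul one smul"
    and "is_basis mul one smul E" and "is_basis mul one smul E'"
    and "qsim smul x one"
  shows "qmeasure mul one smul E x = qmeasure mul one smul E' x"
proof -
  have sm: "scalable_monoid mul one smul"
    using assms(1) by (simp add: quantity_space_def)
  then have unit: "\<And>x. mul one x = x"
    by (simp add: scalable_monoid_def)
  obtain \<mu> where "x = smul \<mu> one"
    using qsim_one_imp_smul_one[OF sm assms(2,4)] .
  then show ?thesis
    using qmeasure_smul_one[OF assms(2) unit] qmeasure_smul_one[OF assms(3) unit] by simp
qed

end
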